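(* Let $p$ be prime, $\mathbb{F}=\mathbb{F}_p$, and let $x,y,z\in\mathbb{F}^N$ satisfy $\sum_{t=1}^Nx(t)^iy(t)^az(t)^b=0$ for all $0\le a,b,i\le p-1$ (with the convention $0^0=1$). Then $$(S_{2p})_{y,z}(x)=\mathcal{H}\big(y^{(p)},z^{(p)}\big),$$ where $S_{2p}(x)=\sum_{T\subseteq[N],|T|=2p}\prod_{i\in T}x_i$.
   Context: Directional derivatives: $f_y(x)=f(x+y)-f(x)$, $f_{y,z}=(f_y)_z$. By definition $\mathcal{H}(y^{(p)},z^{(p)})=\sum_{1\le j_1<\dots<j_{2p}\le N}\ \sum_{\theta\subseteq[2p],|\theta|=p}\ \prod_{i\in\theta}y(j_i)\prod_{i\in[2p]\setminus\theta}z(j_i)$, where $y(j)$ is the $j$-th coordinate of $y$. *)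

theory Defs
  imports "HOL-Computational_Algebra.Primes"
begin

text \<open>Vectors in F^N are functions nat => 'a, with coordinates indexed by 1..N.\<close>

definition esym :: "nat \<Rightarrow> nat \<Rightarrow> (nat \<Rightarrow> 'a::comm_ring_1) \<Rightarrow> 'a" where
  "esym N k x = (\<Sum>T \<in> {T. T \<subseteq> {1..N} \<and> card T = k}. \<Prod>i\<in>T. x i)"

definition dderiv :: "((nat \<Rightarrow> 'a::comm_ring_1) \<Rightarrow> 'a) \<Rightarrow> (nat \<Rightarrow> 'a) \<Rightarrow> (nat \<Rightarrow> 'a) \<Rightarrow> 'a" where
  "dderiv f y = (\<lambda>x. f (\<lambda>t. x t + y t) - f x)"

definition incr_tuples :: "nat \<Rightarrow> nat \<Rightarrow> (nat \<Rightarrow> nat) set" where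
  "incr_tuples N m = {j. (\<forall>i\<in>{1..m}. 1 \<le> j i \<and> j i \<le> N)
                         \<and> (\<forall>i. i \<notin> {1..m} \<longrightarrow> j i = 0)
                         \<and> (\<forall>i1 i2. 1 \<le> i1 \<and> i1 < i2 \<and> i2 \<le> m \<longrightarrow> j i1 < j i2)}"

definition Hform :: "nat \<Rightarrow> nat \<Rightarrow> (nat \<Rightarrow> 'a::comm_ring_1) \<Rightarrow> (nat \<Rightarrow> 'a) \<Rightarrow> 'a" where
  "Hform N p y z = (\<Sum>j \<in> incr_tuples N (2*p).
      \<Sum>\<theta> \<in> {\<theta>. \<theta> \<subseteq> {1..2*p} \<and> card \<theta> = p}.
        (\<Prod>i\<in>\<theta>. y (j i)) * (\<Prod>i\<in>{1..2*p} - \<theta>. z (j i)))"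

end

theory Submission
  imports Defs "HOL-Library.Cardinality" "HOL-Number_Theory.Residues" "HOL-Computational_Algebra.Polynomial"
begin

text \<open>
  The moment hypothesis forces every value of the triple \<open>(x t, y t, z t)\<close> to occur a multiple
  of \<open>p\<close> times: the indicator of a point of \<open>\<bbbF>\<^sup>3\<close> is a product of one-variable polynomials of
  degree at most \<open>p - 1\<close>, so summing it over the coordinates gives \<open>0\<close> in \<open>\<bbbF>\<close>.
  The coordinates therefore split into blocks of \<open>p\<close> equal triples. Appending a block on which
  a vector takes the value \<open>v\<close> multiplies its generating polynomial \<open>\<Prod>(1 + u w\<^sub>t)\<close> by
  \<open>(1 + u v)\<^sup>p = 1 + u\<^sup>p v\<close>, so \<open>S\<^sub>k\<close> gains \<open>v S\<^sub>k\<^sub>-\<^sub>p\<close>. Consequently \<open>S\<^sub>p\<close> is additive on such vectors, and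
  both the second difference of \<open>S\<^sub>2\<^sub>p\<close> and the sum over pairs of disjoint \<open>p\<close>-sets defining \<open>\<H>\<close>
  grow by \<open>y S\<^sub>p(z) + z S\<^sub>p(y)\<close> (with \<open>y, z\<close> the values on the block).
\<close>

section \<open>Elementary symmetric sums over finite index sets\<close>

definition k_subsets :: "'b set \<Rightarrow> nat \<Rightarrow> 'b set set" where
  "k_subsets I k = {T. T \<subseteq> I \<and> card T = k}"

lemma finite_k_subsets [simp]: "finite I \<Longrightarrow> finite (k_subsets I k)"
  unfolding k_subsets_def by (rule finite_subset[of _ "Pow I"]) auto

lemma card_k_subsets: "finite I \<Longrightarrow> card (k_subsets I k) = card I choose k"
  unfolding k_subsets_def by (rule n_subsets)

lemma k_subsets_0 [simp]: "finite I \<Longrightarrow> k_subsets I 0 = {{}}"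
  unfolding k_subsets_def using finite_subset by fastforce

lemma k_subsets_empty [simp]: "k \<noteq> 0 \<Longrightarrow> k_subsets {} k = {}"
  unfolding k_subsets_def by auto

lemma sum_k_subsets_Un:
  assumes "finite J" "finite K" "J \<inter> K = {}"
  shows "(\<Sum>T\<in>k_subsets (J \<union> K) k. F (T \<inter> J) (T \<inter> K)) =
         (\<Sum>i\<le>k. \<Sum>A\<in>k_subsets J i. \<Sum>B\<in>k_subsets K (k - i). F A B)"
proof -
  let ?P = "\<Union>i\<le>k. k_subsets J i \<times> k_subsets K (k - i)"
  have "(\<Sum>T\<in>k_subsets (J \<union> K) k. F (T \<inter> J) (T \<inter> K)) = (\<Sum>(A, B)\<in>?P. F A B)"
  proof (rule sum.reindex_bij_witness[of _ "\<lambda>(A, B). A \<union> B" "\<lambda>T. (T \<inter> J, T \<inter> K)"])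
    fix T assume T: "T \<in> k_subsets (J \<union> K) k"
    then have "card T = card (T \<inter> J) + card (T \<inter> K)"
      using assms by (subst card_Un_disjoint[symmetric])
        (auto simp: k_subsets_def intro: finite_subset intro!: arg_cong[where f = card])
    then show "(T \<inter> J, T \<inter> K) \<in> ?P"
      using T by (auto simp: k_subsets_def)
  next
    fix AB assume "AB \<in> ?P"
    then obtain i A B where AB: "AB = (A, B)" "i \<le> k" "A \<subseteq> J" "card A = i" "B \<subseteq> K" "card B = k - i"
      by (auto simp: k_subsets_def)
    moreover have "card (A \<union> B) = k"
      using AB assms by (subst card_Un_disjoint) (auto intro: finite_subset)
    ultimately show "(case AB of (A, B) \<Rightarrow> A \<union> B) \<in> k_subsets (J \<union> K) k"
      by (auto simp: k_subsets_def)
  qed (use assms in \<open>auto simp: k_subsets_def\<close>)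
  also have "\<dots> = (\<Sum>i\<le>k. \<Sum>(A, B)\<in>k_subsets J i \<times> k_subsets K (k - i). F A B)"
    by (rule sum.UNION_disjoint) (use assms in \<open>auto simp: k_subsets_def\<close>)
  finally show ?thesis
    by (simp add: sum.cartesian_product)
qed

definition esym_on :: "nat \<Rightarrow> ('b \<Rightarrow> 'a::comm_ring_1) \<Rightarrow> 'b set \<Rightarrow> 'a" where
  "esym_on k w I = (\<Sum>T\<in>k_subsets I k. prod w T)"

lemma esym_eq_esym_on: "esym N k w = esym_on k w {1..N}"
  by (simp add: esym_def esym_on_def k_subsets_def)

lemma esym_on_0 [simp]: "finite I \<Longrightarrow> esym_on 0 w I = 1"
  by (simp add: esym_on_def)

lemma esym_on_empty [simp]: "k \<noteq> 0 \<Longrightarrow> esym_on k w {} = 0"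
  by (simp add: esym_on_def)

lemma prod_Int_Un:
  assumes "finite T" "T \<subseteq> J \<union> K" "J \<inter> K = {}"
  shows "prod w T = prod w (T \<inter> J) * prod w (T \<inter> K)"
proof -
  have "T = (T \<inter> J) \<union> (T \<inter> K)" using assms(2) by blast
  also have "prod w \<dots> = prod w (T \<inter> J) * prod w (T \<inter> K)"
    by (rule prod.union_disjoint) (use assms in auto)
  finally show ?thesis .
qed

lemma esym_on_Un:
  assumes "finite J" "finite K" "J \<inter> K = {}"
  shows "esym_on k w (J \<union> K) = (\<Sum>i\<le>k. esym_on i w J * esym_on (k - i) w K)"
proof -
  have "esym_on k w (J \<union> K) = (\<Sum>T\<in>k_subsets (J \<union> K) k. prod w (T \<inter> J) * prod w (T \<inter> K))"
    unfolding esym_on_def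
    by (rule sum.cong) (use assms in \<open>auto simp: k_subsets_def intro: prod_Int_Un finite_subset\<close>)
  also have "\<dots> = (\<Sum>i\<le>k. esym_on i w J * esym_on (k - i) w K)"
    by (simp add: sum_k_subsets_Un[OF assms, of "\<lambda>A B. prod w A * prod w B"] esym_on_def sum_product)
  finally show ?thesis .
qed

lemma esym_on_const:
  assumes "finite B" "\<And>t. t \<in> B \<Longrightarrow> w t = v"
  shows "esym_on k w B = of_nat (card B choose k) * v ^ k"
proof -
  have "esym_on k w B = (\<Sum>T\<in>k_subsets B k. v ^ k)"
    unfolding esym_on_def
    by (rule sum.cong) (use assms in \<open>auto simp: k_subsets_def subset_iff\<close>)
  then show ?thesis
    using assms(1) by (simp add: card_k_subsets)
qed

lemma esym_on_Un_const:
  assumes "finite J" "finite B" "J \<inter> B = {}" "\<And>t. t \<in> B \<Longrightarrow> w t = v"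
  shows "esym_on k w (J \<union> B) = (\<Sum>j\<le>k. of_nat (card B choose j) * v ^ j * esym_on (k - j) w J)"
  using esym_on_Un[of B J k w] assms by (simp add: Un_commute Int_commute esym_on_const mult_ac)

section \<open>Fields of prime order\<close>

lemma CHAR_eq_card:
  assumes "prime CARD('a::{field,finite})"
  shows "CHAR('a) = CARD('a)"
proof -
  have "CHAR('a) \<noteq> 1"
    using of_nat_CHAR[where 'a = 'a] by auto
  with CHAR_dvd_CARD[where 'a = 'a] assms show ?thesis
    by (auto simp: prime_nat_iff)
qed

lemma of_nat_eq_iff_cong_card:
  assumes "prime CARD('a::{field,finite})"
  shows "(of_nat m :: 'a) = of_nat n \<longleftrightarrow> [m = n] (mod CARD('a))"
  using of_nat_eq_iff_cong_CHAR[where 'a = 'a] by (simp add: CHAR_eq_card[OF assms])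

lemma of_nat_eq_0_iff_card_dvd:
  assumes "prime CARD('a::{field,finite})"
  shows "(of_nat n :: 'a) = 0 \<longleftrightarrow> CARD('a) dvd n"
  using of_nat_eq_0_iff_char_dvd[where 'a = 'a] by (simp add: CHAR_eq_card[OF assms])

lemma of_nat_image_lessThan_card:
  assumes "prime CARD('a::{field,finite})"
  shows "of_nat ` {..<CARD('a)} = (UNIV :: 'a set)"
proof (rule card_subset_eq)
  have "inj_on (of_nat :: nat \<Rightarrow> 'a) {..<CARD('a)}"
    by (rule inj_onI) (simp add: of_nat_eq_iff_cong_card[OF assms] cong_def)
  then show "card (of_nat ` {..<CARD('a)} :: 'a set) = CARD('a)"
    by (simp add: card_image)
qed auto

text \<open>Fermat's little theorem, transported along the isomorphism \<open>\<int>/p\<int> \<cong> 'a\<close>.\<close>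
lemma power_card_eq_self:
  assumes "prime CARD('a::{field,finite})"
  shows "(x :: 'a) ^ CARD('a) = x"
proof -
  let ?p = "CARD('a)"
  obtain k where k: "k < ?p" "x = of_nat k"
    using of_nat_image_lessThan_card[OF assms] by (metis UNIV_I imageE lessThan_iff)
  have "[k ^ ?p = k] (mod ?p)"
  proof (cases "k = 0")
    case False
    with k have "[k ^ (?p - 1) = 1] (mod ?p)"
      using assms by (intro fermat_theorem) (auto dest: dvd_imp_le)
    then have "[k * k ^ (?p - 1) = k * 1] (mod ?p)"
      by (rule cong_scalar_left)
    moreover have "k * k ^ (?p - 1) = k ^ ?p"
      using assms by (simp add: power_eq_if prime_gt_0_nat)
    ultimately show ?thesis by simp
  qed (use assms prime_gt_0_nat in \<open>auto simp: zero_power\<close>)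
  then show ?thesis
    using k by (simp flip: of_nat_power add: of_nat_eq_iff_cong_card[OF assms])
qed

lemma power_card_minus_1_eq_1:
  assumes "prime CARD('a::{field,finite})" "(x :: 'a) \<noteq> 0"
  shows "x ^ (CARD('a) - 1) = 1"
proof -
  have "x * x ^ (CARD('a) - 1) = x * 1"
    using power_card_eq_self[OF assms(1), of x] assms(1)
    by (simp add: power_eq_if prime_gt_0_nat)
  with assms(2) show ?thesis by simp
qed

lemma sum_binomial_card:
  assumes "prime CARD('a::{field,finite})"
  shows "(\<Sum>j\<le>k. of_nat (CARD('a) choose j) * f j :: 'a) = f 0 + (if CARD('a) \<le> k then f CARD('a) else 0)"
proof -
  let ?p = "CARD('a)"
  have p: "0 < ?p" using assms prime_gt_0_nat by blast
  have vanish: "(of_nat (?p choose j) :: 'a) = 0" if "j \<noteq> 0" "j \<noteq> ?p" for j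
    using that assms dvd_choose_prime[of j ?p]
    by (cases "j < ?p") (auto simp: of_nat_eq_0_iff_card_dvd binomial_eq_0)
  have "(\<Sum>j\<le>k. of_nat (?p choose j) * f j :: 'a) = (\<Sum>j\<in>{0} \<union> {?p} \<inter> {..k}. of_nat (?p choose j) * f j)"
    by (rule sum.mono_neutral_right) (use vanish in auto)
  then show ?thesis
    using p by auto
qed

section \<open>Appending a block of \<open>p\<close> equal coordinates\<close>

lemma sum_k_subsets_Un_card:
  assumes "finite J" "finite B" "J \<inter> B = {}"
  shows "(\<Sum>T\<in>k_subsets (J \<union> B) k. F (T \<inter> J) (card (T \<inter> B))) =
         (\<Sum>c\<le>k. of_nat (card B choose c) * (\<Sum>A\<in>k_subsets J (k - c). F A c))"
proof -
  have "(\<Sum>T\<in>k_subsets (J \<union> B) k. F (T \<inter> J) (card (T \<inter> B))) =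
        (\<Sum>c\<le>k. \<Sum>C\<in>k_subsets B c. \<Sum>A\<in>k_subsets J (k - c). F A (card C))"
    using sum_k_subsets_Un[of B J "\<lambda>C A. F A (card C)" k] assms
    by (simp add: Un_commute Int_commute)
  also have "\<dots> = (\<Sum>c\<le>k. of_nat (card B choose c) * (\<Sum>A\<in>k_subsets J (k - c). F A c))"
    by (intro sum.cong refl) (simp add: k_subsets_def card_k_subsets[OF assms(2), symmetric])
  finally show ?thesis .
qed

lemma esym_on_add_block:
  assumes "prime CARD('a::{field,finite})"
    and "finite J" "finite B" "J \<inter> B = {}" "card B = CARD('a)" "\<And>t. t \<in> B \<Longrightarrow> w t = v"
  shows "esym_on k w (J \<union> B) =
         esym_on k w J + (if CARD('a) \<le> k then v * esym_on (k - CARD('a)) w J else (0 :: 'a))"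
  using esym_on_Un_const[OF assms(2-4,6), where k = k] sum_binomial_card[OF assms(1), where k = k]
  by (simp add: assms(5) mult.assoc power_card_eq_self[OF assms(1)])

lemma esym_on_Un_Diff_const:
  assumes "finite J" "finite B" "J \<inter> B = {}" "\<And>t. t \<in> B \<Longrightarrow> w t = v"
  shows "esym_on k w (J \<union> B - T) =
         (\<Sum>j\<le>k. of_nat (card (B - T) choose j) * v ^ j * esym_on (k - j) w (J - T))"
proof -
  have "J \<union> B - T = (J - T) \<union> (B - T)"
    by blast
  also have "esym_on k w \<dots> =
      (\<Sum>j\<le>k. of_nat (card (B - T) choose j) * v ^ j * esym_on (k - j) w (J - T))"
    by (rule esym_on_Un_const) (use assms in auto)
  finally show ?thesis .
qed

definition pair_esym :: "nat \<Rightarrow> ('b \<Rightarrow> 'a::comm_ring_1) \<Rightarrow> ('b \<Rightarrow> 'a) \<Rightarrow> 'b set \<Rightarrow> 'a" where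
  "pair_esym k y z I = (\<Sum>B\<in>k_subsets I k. prod y B * esym_on k z (I - B))"

lemma pair_esym_add_block:
  fixes y z :: "'b \<Rightarrow> 'a::{field,finite}"
  assumes p: "prime CARD('a)"
    and J: "finite J" and B: "finite B" "J \<inter> B = {}" "card B = CARD('a)"
    and yB: "\<And>t. t \<in> B \<Longrightarrow> y t = Y" and zB: "\<And>t. t \<in> B \<Longrightarrow> z t = Z"
  shows "pair_esym CARD('a) y z (J \<union> B) =
         pair_esym CARD('a) y z J + Y * esym_on CARD('a) z J + Z * esym_on CARD('a) y J"
proof -
  let ?p = "CARD('a)"
  \<comment> \<open>\<open>H i A\<close> is \<open>S\<^sub>p(z)\<close> on \<open>J - A\<close> together with \<open>i\<close> coordinates of the block\<close>
  define H where "H i A = (\<Sum>l\<le>?p. of_nat (i choose l) * Z ^ l * esym_on (?p - l) z (J - A))" for i A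
  have summand: "prod y T * esym_on ?p z (J \<union> B - T) =
      prod y (T \<inter> J) * Y ^ card (T \<inter> B) * H (?p - card (T \<inter> B)) (T \<inter> J)"
    if "T \<in> k_subsets (J \<union> B) ?p" for T
  proof -
    have T: "finite T" "T \<subseteq> J \<union> B"
      using that J B by (auto simp: k_subsets_def intro: finite_subset)
    have "prod y (T \<inter> B) = prod (\<lambda>_. Y) (T \<inter> B)"
      using yB by (intro prod.cong) auto
    moreover have "card (B - T) = ?p - card (T \<inter> B)" "J - T = J - T \<inter> J"
      using B by (auto simp: card_Diff_subset_Int Int_commute)
    ultimately show ?thesis
      using prod_Int_Un[OF T B(2), of y] esym_on_Un_Diff_const[OF J B(1,2) zB, where T = T and k = ?p]
      by (simp add: H_def)
  qed
  have H_0: "H 0 {} = esym_on ?p z J"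
    by (simp add: H_def sum.atMost_shift)
  have H_p: "H ?p A = esym_on ?p z (J - A) + Z" for A
    using sum_binomial_card[OF p, where k = ?p and f = "\<lambda>l. Z ^ l * esym_on (?p - l) z (J - A)"] J
    by (simp add: H_def mult.assoc power_card_eq_self[OF p])
  have "pair_esym ?p y z (J \<union> B) =
      (\<Sum>T\<in>k_subsets (J \<union> B) ?p. prod y (T \<inter> J) * Y ^ card (T \<inter> B) * H (?p - card (T \<inter> B)) (T \<inter> J))"
    unfolding pair_esym_def by (rule sum.cong) (simp_all add: summand)
  also have "\<dots> = (\<Sum>c\<le>?p. of_nat (?p choose c) * (\<Sum>A\<in>k_subsets J (?p - c). prod y A * Y ^ c * H (?p - c) A))"
    using sum_k_subsets_Un_card[OF J B(1,2), where F = "\<lambda>A c. prod y A * Y ^ c * H (?p - c) A"]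
    by (simp add: B(3))
  also have "\<dots> = (\<Sum>A\<in>k_subsets J ?p. prod y A * H ?p A) + Y * H 0 {}"
    by (simp add: sum_binomial_card[OF p] J power_card_eq_self[OF p])
  also have "\<dots> = pair_esym ?p y z J + Y * esym_on ?p z J + Z * esym_on ?p y J"
    by (simp add: H_p H_0 pair_esym_def esym_on_def distrib_left sum.distrib sum_distrib_left mult.commute)
  finally show ?thesis .
qed

section \<open>Induction over blocks\<close>

definition fibres_dvd :: "nat \<Rightarrow> ('b \<Rightarrow> 'c) \<Rightarrow> 'b set \<Rightarrow> bool" where
  "fibres_dvd p g I \<longleftrightarrow> (\<forall>v. p dvd card {t \<in> I. g t = v})"

lemma fibres_dvd_remove_block:
  assumes "fibres_dvd p g I" "finite I" "B \<subseteq> I" "card B = p" "\<And>t. t \<in> B \<Longrightarrow> g t = v"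
  shows "fibres_dvd p g (I - B)"
  unfolding fibres_dvd_def
proof
  fix u
  show "p dvd card {t \<in> I - B. g t = u}"
  proof (cases "u = v")
    case True
    then have "{t \<in> I - B. g t = u} = {t \<in> I. g t = u} - B" and "B \<subseteq> {t \<in> I. g t = u}"
      using assms(3,5) by auto
    then show ?thesis
      using assms(1,2,4) by (simp add: card_Diff_subset finite_subset fibres_dvd_def)
  next
    case False
    then have "{t \<in> I - B. g t = u} = {t \<in> I. g t = u}"
      using assms(5) by auto
    then show ?thesis
      using assms(1) by (simp add: fibres_dvd_def)
  qed
qed

lemma fibres_dvd_induct [consumes 2, case_names empty block]:
  assumes "finite I" "fibres_dvd p g I"
    and empty: "P {}"
    and block: "\<And>J B v. finite J \<Longrightarrow> fibres_dvd p g J \<Longrightarrow> P J \<Longrightarrow> finite B \<Longrightarrow> J \<inter> B = {} \<Longrightarrow>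
                  card B = p \<Longrightarrow> (\<And>t. t \<in> B \<Longrightarrow> g t = v) \<Longrightarrow> P (J \<union> B)"
  shows "P I"
  using assms(1,2)
proof (induction "card I" arbitrary: I rule: less_induct)
  case less
  show ?case
  proof (cases "I = {}")
    case False
    then obtain t0 where t0: "t0 \<in> I" by blast
    let ?C = "{t \<in> I. g t = g t0}"
    have "p dvd card ?C" "0 < card ?C"
      using less.prems t0 by (auto simp: fibres_dvd_def card_gt_0_iff)
    then have "0 < p"
      by (auto intro!: gr0I)
    obtain B where B: "B \<subseteq> ?C" "card B = p"
      using obtain_subset_with_card_n dvd_imp_le \<open>p dvd card ?C\<close> \<open>0 < card ?C\<close> by metis
    then have "finite B" "B \<subseteq> I"
      using less.prems(1) by (auto intro: finite_subset)
    moreover have "fibres_dvd p g (I - B)"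
      using B less.prems by (intro fibres_dvd_remove_block[where v = "g t0"]) auto
    moreover have "card (I - B) < card I"
    proof (rule psubset_card_mono)
      have "B \<noteq> {}" using B \<open>0 < p\<close> by auto
      with \<open>B \<subseteq> I\<close> show "I - B \<subset> I" by blast
    qed (rule less.prems(1))
    ultimately have "P ((I - B) \<union> B)"
      using B less by (intro block[where v = "g t0"]) auto
    then show ?thesis
      using \<open>B \<subseteq> I\<close> by (simp add: Un_absorb2)
  qed (simp add: empty)
qed

lemma esym_on_card_add:
  fixes u w :: "'b \<Rightarrow> 'a::{field,finite}"
  assumes p: "prime CARD('a)" and "finite I" "fibres_dvd CARD('a) g I"
    and u: "\<And>s t. g s = g t \<Longrightarrow> u s = u t" and w: "\<And>s t. g s = g t \<Longrightarrow> w s = w t"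
  shows "esym_on CARD('a) (\<lambda>t. u t + w t) I = esym_on CARD('a) u I + esym_on CARD('a) w I"
  using assms(2,3)
proof (induction rule: fibres_dvd_induct)
  case empty
  then show ?case
    using p prime_gt_0_nat by simp
next
  case (block J B v)
  obtain t0 where "t0 \<in> B"
    using block.hyps(5) p prime_gt_0_nat by fastforce
  have add_block: "esym_on CARD('a) f (J \<union> B) = esym_on CARD('a) f J + f t0"
    if "\<And>s t. g s = g t \<Longrightarrow> f s = f t" for f :: "'b \<Rightarrow> 'a"
  proof -
    have "f t = f t0" if "t \<in> B" for t
      using \<open>t0 \<in> B\<close> block.hyps(6) that \<open>\<And>s t. g s = g t \<Longrightarrow> f s = f t\<close> by metis
    then show ?thesis
      using esym_on_add_block[OF p block.hyps(1,3,4,5), of f "f t0" "CARD('a)"] block.hyps(1) by simp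
  qed
  have "esym_on CARD('a) (\<lambda>t. u t + w t) (J \<union> B) = esym_on CARD('a) (\<lambda>t. u t + w t) J + (u t0 + w t0)"
    using u w by (intro add_block) metis
  with add_block[OF u] add_block[OF w] show ?case
    using block.IH by (simp add: algebra_simps)
qed

lemma esym_on_second_difference:
  fixes x y z :: "'b \<Rightarrow> 'a::{field,finite}"
  assumes p: "prime CARD('a)" and "finite I" "fibres_dvd CARD('a) (\<lambda>t. (x t, y t, z t)) I"
  shows "esym_on (2 * CARD('a)) (\<lambda>t. x t + z t + y t) I - esym_on (2 * CARD('a)) (\<lambda>t. x t + z t) I
         - (esym_on (2 * CARD('a)) (\<lambda>t. x t + y t) I - esym_on (2 * CARD('a)) x I)
         = pair_esym CARD('a) y z I"
  using assms(2,3)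
proof (induction rule: fibres_dvd_induct)
  case empty
  then show ?case
    using p prime_gt_0_nat by (simp add: pair_esym_def)
next
  case (block J B v)
  let ?p = "CARD('a)"
  obtain t0 where "t0 \<in> B"
    using block.hyps(5) p prime_gt_0_nat by fastforce
  then have const: "x t = x t0" "y t = y t0" "z t = z t0" if "t \<in> B" for t
    using block.hyps(6) that by (metis prod.inject)+
  have add_block: "esym_on (2 * ?p) f (J \<union> B) = esym_on (2 * ?p) f J + f t0 * esym_on ?p f J"
    if "\<And>t. t \<in> B \<Longrightarrow> f t = f t0" for f :: "'b \<Rightarrow> 'a"
    using esym_on_add_block[OF p block.hyps(1,3,4,5) that, where k = "2 * ?p"] by simp
  have esym_on_add: "esym_on ?p (\<lambda>t. u t + w t) J = esym_on ?p u J + esym_on ?p w J"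
    if "\<And>s t. (x s, y s, z s) = (x t, y t, z t) \<Longrightarrow> u s = u t"
       "\<And>s t. (x s, y s, z s) = (x t, y t, z t) \<Longrightarrow> w s = w t" for u w :: "'b \<Rightarrow> 'a"
    using esym_on_card_add[OF p block.hyps(1,2) that] .
  have xz: "esym_on ?p (\<lambda>t. x t + z t) J = esym_on ?p x J + esym_on ?p z J"
    and "esym_on ?p (\<lambda>t. x t + y t) J = esym_on ?p x J + esym_on ?p y J"
    by (rule esym_on_add; simp)+
  moreover have "esym_on ?p (\<lambda>t. x t + z t + y t) J = esym_on ?p x J + esym_on ?p z J + esym_on ?p y J"
    using esym_on_add[of "\<lambda>t. x t + z t" y] xz by simp
  moreover have "pair_esym ?p y z (J \<union> B) = pair_esym ?p y z J + y t0 * esym_on ?p z J + z t0 * esym_on ?p y J"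
    using pair_esym_add_block[OF p block.hyps(1,3,4,5)] const by blast
  moreover have "esym_on (2 * ?p) (\<lambda>t. x t + z t + y t) (J \<union> B) =
      esym_on (2 * ?p) (\<lambda>t. x t + z t + y t) J + (x t0 + z t0 + y t0) * esym_on ?p (\<lambda>t. x t + z t + y t) J"
    and "esym_on (2 * ?p) (\<lambda>t. x t + z t) (J \<union> B) =
      esym_on (2 * ?p) (\<lambda>t. x t + z t) J + (x t0 + z t0) * esym_on ?p (\<lambda>t. x t + z t) J"
    and "esym_on (2 * ?p) (\<lambda>t. x t + y t) (J \<union> B) =
      esym_on (2 * ?p) (\<lambda>t. x t + y t) J + (x t0 + y t0) * esym_on ?p (\<lambda>t. x t + y t) J"
    and "esym_on (2 * ?p) x (J \<union> B) = esym_on (2 * ?p) x J + x t0 * esym_on ?p x J"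
    using add_block const by simp_all
  ultimately show ?case
    using block.IH by (simp add: algebra_simps)
qed

section \<open>The form \<open>\<H>\<close> as a sum over pairs of disjoint subsets\<close>

lemma k_subsets_image:
  assumes "inj_on f S"
  shows "k_subsets (f ` S) k = image f ` k_subsets S k"
proof -
  have card: "card (f ` T) = card T" if "T \<subseteq> S" for T
    using card_image inj_on_subset[OF assms that] by blast
  show ?thesis
  proof
    show "image f ` k_subsets S k \<subseteq> k_subsets (f ` S) k"
      using card by (auto simp: k_subsets_def)
    show "k_subsets (f ` S) k \<subseteq> image f ` k_subsets S k"
    proof
      fix B assume "B \<in> k_subsets (f ` S) k"
      then obtain T where "T \<subseteq> S" "B = f ` T" "card B = k"
        by (auto simp: k_subsets_def subset_image_iff)
      with card show "B \<in> image f ` k_subsets S k"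
        by (auto simp: k_subsets_def)
    qed
  qed
qed

lemma sum_k_subsets_image:
  assumes "inj_on f S"
  shows "(\<Sum>B\<in>k_subsets (f ` S) k. g B) = (\<Sum>T\<in>k_subsets S k. g (f ` T))"
proof -
  have "inj_on (image f) (k_subsets S k)"
    using inj_on_image_Pow[OF assms] by (rule inj_on_subset) (auto simp: k_subsets_def)
  then show ?thesis
    by (simp add: k_subsets_image[OF assms] sum.reindex)
qed

lemma strict_mono_on_incr_tuples: "j \<in> incr_tuples N m \<Longrightarrow> strict_mono_on {1..m} j"
  by (auto simp: incr_tuples_def strict_mono_on_def)

lemma inj_on_incr_tuples: "j \<in> incr_tuples N m \<Longrightarrow> inj_on j {1..m}"
  by (rule strict_mono_on_imp_inj_on[OF strict_mono_on_incr_tuples])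

definition tuple_of_set :: "nat \<Rightarrow> nat set \<Rightarrow> nat \<Rightarrow> nat" where
  "tuple_of_set m T i = (if i \<in> {1..m} then sorted_list_of_set T ! (i - 1) else 0)"

lemma tuple_of_set_image:
  assumes "j \<in> incr_tuples N m"
  shows "tuple_of_set m (j ` {1..m}) = j"
proof
  fix i
  let ?l = "map (\<lambda>k. j (Suc k)) [0..<m]"
  have mono: "strict_mono_on {1..m} j"
    using strict_mono_on_incr_tuples[OF assms] .
  have "sorted_wrt (<) ?l"
    using mono by (auto simp: sorted_wrt_iff_nth_less strict_mono_on_def)
  moreover have "set ?l = j ` {1..m}"
    by (auto simp: image_iff Bex_def) (metis Suc_le_eq Suc_pred atLeastAtMost_iff)
  ultimately have "sorted_list_of_set (j ` {1..m}) = ?l"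
    by (metis sorted_list_of_set_sort_remdups strict_sorted_iff distinct_remdups_id sorted_sort_id)
  moreover have "j i = 0" if "i \<notin> {1..m}"
    using assms that by (simp add: incr_tuples_def)
  ultimately show "tuple_of_set m (j ` {1..m}) i = j i"
    by (auto simp: tuple_of_set_def)
qed

lemma
  assumes "T \<in> k_subsets {1..N} m"
  shows image_tuple_of_set: "tuple_of_set m T ` {1..m} = T"
    and tuple_of_set_in_incr_tuples: "tuple_of_set m T \<in> incr_tuples N m"
proof -
  let ?l = "sorted_list_of_set T"
  have T: "T \<subseteq> {1..N}" "finite T" "card T = m"
    using assms by (auto simp: k_subsets_def intro: finite_subset)
  then have l: "sorted_wrt (<) ?l" "set ?l = T" "length ?l = m"
    by auto
  have nth: "tuple_of_set m T i = ?l ! (i - 1)" "i - 1 < length ?l" if "i \<in> {1..m}" for i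
    using that l by (auto simp: tuple_of_set_def)
  show "tuple_of_set m T ` {1..m} = T"
  proof (intro equalityI subsetI)
    fix t assume "t \<in> T"
    then obtain k where "k < m" "?l ! k = t"
      using l by (metis in_set_conv_nth)
    then show "t \<in> tuple_of_set m T ` {1..m}"
      by (intro image_eqI[of _ _ "Suc k"]) (auto simp: tuple_of_set_def)
  qed (use nth l in \<open>auto intro: nth_mem\<close>)
  then have "tuple_of_set m T i \<in> {1..N}" if "i \<in> {1..m}" for i
    using that T by blast
  moreover have "tuple_of_set m T i1 < tuple_of_set m T i2" if "1 \<le> i1" "i1 < i2" "i2 \<le> m" for i1 i2
    using that nth[of i1] nth[of i2] sorted_wrt_nth_less[OF l(1), of "i1 - 1" "i2 - 1"] by auto
  ultimately show "tuple_of_set m T \<in> incr_tuples N m"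
    by (auto simp: incr_tuples_def tuple_of_set_def)
qed

lemma bij_betw_incr_tuples_k_subsets:
  "bij_betw (\<lambda>j. j ` {1..m}) (incr_tuples N m) (k_subsets {1..N} m)"
proof (rule bij_betw_byWitness[where f' = "tuple_of_set m"])
  show "(\<lambda>j. j ` {1..m}) ` incr_tuples N m \<subseteq> k_subsets {1..N} m"
  proof (intro image_subsetI)
    fix j assume "j \<in> incr_tuples N m"
    with card_image[OF inj_on_incr_tuples[OF this]] show "j ` {1..m} \<in> k_subsets {1..N} m"
      by (auto simp: k_subsets_def incr_tuples_def)
  qed
  show "\<forall>j\<in>incr_tuples N m. tuple_of_set m (j ` {1..m}) = j"
    using tuple_of_set_image by blast
  show "\<forall>T\<in>k_subsets {1..N} m. tuple_of_set m T ` {1..m} = T"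
    using image_tuple_of_set by blast
  show "tuple_of_set m ` k_subsets {1..N} m \<subseteq> incr_tuples N m"
    using tuple_of_set_in_incr_tuples by blast
qed

lemma sum_k_subsets_k_subsets:
  assumes "finite I"
  shows "(\<Sum>T\<in>k_subsets I (a + b). \<Sum>B\<in>k_subsets T a. F B (T - B)) =
         (\<Sum>B\<in>k_subsets I a. \<Sum>C\<in>k_subsets (I - B) b. F B C)"
proof -
  have fin: "finite T" if "T \<in> k_subsets I k" for T k
    using that assms by (auto simp: k_subsets_def intro: finite_subset)
  have "(\<Sum>T\<in>k_subsets I (a + b). \<Sum>B\<in>k_subsets T a. F B (T - B)) =
        (\<Sum>(T, B)\<in>Sigma (k_subsets I (a + b)) (\<lambda>T. k_subsets T a). F B (T - B))"
    by (rule sum.Sigma) (use assms fin in auto)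
  also have "\<dots> = (\<Sum>(B, C)\<in>Sigma (k_subsets I a) (\<lambda>B. k_subsets (I - B) b). F B C)"
  proof (rule sum.reindex_bij_witness[of _ "\<lambda>(B, C). (B \<union> C, B)" "\<lambda>(T, B). (B, T - B)"])
    fix TB assume "TB \<in> Sigma (k_subsets I (a + b)) (\<lambda>T. k_subsets T a)"
    then obtain T B where TB: "TB = (T, B)" "T \<subseteq> I" "card T = a + b" "B \<subseteq> T" "card B = a"
      by (auto simp: k_subsets_def)
    moreover have "card (T - B) = b"
      using TB assms by (simp add: card_Diff_subset finite_subset)
    ultimately show "(case TB of (T, B) \<Rightarrow> (B, T - B)) \<in> Sigma (k_subsets I a) (\<lambda>B. k_subsets (I - B) b)"
      by (auto simp: k_subsets_def)
  next
    fix BC assume "BC \<in> Sigma (k_subsets I a) (\<lambda>B. k_subsets (I - B) b)"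
    then obtain B C where BC: "BC = (B, C)" "B \<subseteq> I" "card B = a" "C \<subseteq> I - B" "card C = b"
      by (auto simp: k_subsets_def)
    moreover have "card (B \<union> C) = a + b"
      using BC assms by (subst card_Un_disjoint) (auto intro: finite_subset)
    ultimately show "(case BC of (B, C) \<Rightarrow> (B \<union> C, B)) \<in> Sigma (k_subsets I (a + b)) (\<lambda>T. k_subsets T a)"
      by (auto simp: k_subsets_def)
  qed (auto simp: k_subsets_def)
  also have "\<dots> = (\<Sum>B\<in>k_subsets I a. \<Sum>C\<in>k_subsets (I - B) b. F B C)"
    by (rule sum.Sigma[symmetric]) (use assms in auto)
  finally show ?thesis .
qed

lemma Hform_eq_pair_esym: "Hform N p y z = pair_esym p y z {1..N}"
proof -
  have inner: "(\<Sum>\<theta>\<in>k_subsets {1..2 * p} p. (\<Prod>i\<in>\<theta>. y (j i)) * (\<Prod>i\<in>{1..2 * p} - \<theta>. z (j i))) =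
      (\<Sum>B\<in>k_subsets (j ` {1..2 * p}) p. prod y B * prod z (j ` {1..2 * p} - B))"
    if "j \<in> incr_tuples N (2 * p)" for j
  proof -
    have inj: "inj_on j {1..2 * p}"
      using inj_on_incr_tuples[OF that] .
    have "prod y (j ` \<theta>) * prod z (j ` {1..2 * p} - j ` \<theta>) =
        (\<Prod>i\<in>\<theta>. y (j i)) * (\<Prod>i\<in>{1..2 * p} - \<theta>. z (j i))" if "\<theta> \<subseteq> {1..2 * p}" for \<theta>
      using that inj by (simp add: inj_on_image_set_diff[symmetric] prod.reindex inj_on_subset)
    then show ?thesis
      unfolding sum_k_subsets_image[OF inj] by (intro sum.cong) (auto simp: k_subsets_def)
  qed
  have "Hform N p y z = (\<Sum>j\<in>incr_tuples N (2 * p).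
      \<Sum>B\<in>k_subsets (j ` {1..2 * p}) p. prod y B * prod z (j ` {1..2 * p} - B))"
    unfolding Hform_def k_subsets_def[symmetric] by (rule sum.cong[OF refl]) (rule inner)
  also have "\<dots> = (\<Sum>T\<in>k_subsets {1..N} (p + p). \<Sum>B\<in>k_subsets T p. prod y B * prod z (T - B))"
    using sum.reindex_bij_betw[OF bij_betw_incr_tuples_k_subsets] by (simp add: mult_2)
  also have "\<dots> = pair_esym p y z {1..N}"
    using sum_k_subsets_k_subsets[where I = "{1..N}" and a = p and b = p and F = "\<lambda>B C. prod y B * prod z C"]
    by (simp add: pair_esym_def esym_on_def sum_distrib_left)
  finally show ?thesis .
qed

section \<open>Vanishing moments force equal coordinates into blocks\<close>

lemma poly_eq_sum_coeff:
  fixes u :: "'a::comm_semiring_1"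
  assumes "degree q \<le> n"
  shows "poly q u = (\<Sum>i\<le>n. coeff q i * u ^ i)"
  unfolding poly_altdef
  by (rule sum.mono_neutral_left) (use assms in \<open>auto simp: coeff_eq_0\<close>)

lemma sum_poly_moments_eq_0:
  fixes x y z :: "'b \<Rightarrow> 'a::comm_ring_1"
  assumes moments: "\<And>i a b. i \<le> n \<Longrightarrow> a \<le> n \<Longrightarrow> b \<le> n \<Longrightarrow> (\<Sum>t\<in>I. x t ^ i * y t ^ a * z t ^ b) = 0"
    and "degree q \<le> n" "degree r \<le> n" "degree s \<le> n"
  shows "(\<Sum>t\<in>I. poly q (x t) * poly r (y t) * poly s (z t)) = 0"
proof -
  have "poly q u * poly r v * poly s w =
      (\<Sum>i\<le>n. \<Sum>a\<le>n. \<Sum>b\<le>n. coeff q i * coeff r a * coeff s b * (u ^ i * v ^ a * w ^ b))" for u v w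
    unfolding poly_eq_sum_coeff[OF assms(2)] poly_eq_sum_coeff[OF assms(3)] poly_eq_sum_coeff[OF assms(4)]
      sum_product sum_distrib_right
    by (simp add: sum_distrib_left mult_ac)
  then have "(\<Sum>t\<in>I. poly q (x t) * poly r (y t) * poly s (z t)) =
      (\<Sum>t\<in>I. \<Sum>i\<le>n. \<Sum>a\<le>n. \<Sum>b\<le>n. coeff q i * coeff r a * coeff s b * (x t ^ i * y t ^ a * z t ^ b))"
    by simp
  also have "\<dots> = (\<Sum>i\<le>n. \<Sum>a\<le>n. \<Sum>b\<le>n. coeff q i * coeff r a * coeff s b * (\<Sum>t\<in>I. x t ^ i * y t ^ a * z t ^ b))"
    by (simp add: sum_distrib_left sum.swap[of _ I])
  also have "\<dots> = 0"
    by (simp add: moments)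
  finally show ?thesis .
qed

lemma degree_point_indicator: "degree (1 - [:- X, 1:] ^ n) \<le> n" for X :: "'a::comm_ring_1"
  by (intro degree_diff_le) (simp_all add: degree_linear_power)

lemma poly_point_indicator:
  assumes "prime CARD('a::{field,finite})"
  shows "poly (1 - [:- X, 1:] ^ (CARD('a) - 1)) u = (if u = X then 1 else (0 :: 'a))"
proof -
  have "1 < CARD('a)"
    using assms prime_gt_1_nat by blast
  then show ?thesis
    using power_card_minus_1_eq_1[OF assms, of "u - X"] by (simp add: zero_power)
qed

lemma fibres_dvd_of_moments:
  fixes x y z :: "'b \<Rightarrow> 'a::{field,finite}"
  assumes p: "prime CARD('a)"
    and moments: "\<And>i a b. i \<le> CARD('a) - 1 \<Longrightarrow> a \<le> CARD('a) - 1 \<Longrightarrow> b \<le> CARD('a) - 1 \<Longrightarrow>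
                   (\<Sum>t\<in>I. x t ^ i * y t ^ a * z t ^ b) = 0"
    and "finite I"
  shows "fibres_dvd CARD('a) (\<lambda>t. (x t, y t, z t)) I"
  unfolding fibres_dvd_def
proof
  fix v :: "'a \<times> 'a \<times> 'a"
  obtain X Y Z where v: "v = (X, Y, Z)"
    by (cases v) auto
  let ?ind = "\<lambda>X. 1 - [:- X, 1:] ^ (CARD('a) - 1)"
  have "(of_nat (card {t \<in> I. (x t, y t, z t) = v}) :: 'a) = (\<Sum>t\<in>{t \<in> I. (x t, y t, z t) = v}. 1)"
    by simp
  also have "\<dots> = (\<Sum>t\<in>I. if (x t, y t, z t) = v then 1 else 0)"
    using \<open>finite I\<close> by (rule sum.inter_filter)
  also have "\<dots> = (\<Sum>t\<in>I. poly (?ind X) (x t) * poly (?ind Y) (y t) * poly (?ind Z) (z t))"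
    by (simp only: poly_point_indicator[OF p] v) (intro sum.cong; simp)
  also have "\<dots> = 0"
    by (rule sum_poly_moments_eq_0[OF moments degree_point_indicator degree_point_indicator
          degree_point_indicator])
  finally show "CARD('a) dvd card {t \<in> I. (x t, y t, z t) = v}"
    by (simp add: of_nat_eq_0_iff_card_dvd[OF p])
qed

theorem lemma3p1:
  fixes x y z :: "nat \<Rightarrow> 'a::{field, finite}"
    and p N :: nat
  assumes "prime p"
    and "card (UNIV :: 'a set) = p"
    and "\<forall>i a b. i \<le> p - 1 \<and> a \<le> p - 1 \<and> b \<le> p - 1 \<longrightarrow>
           (\<Sum>t=1..N. x t ^ i * y t ^ a * z t ^ b) = 0"
  shows "dderiv (dderiv (esym N (2*p)) y) z x = Hform N p y z"
proof -
  have p: "prime CARD('a)"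
    using assms(1,2) by simp
  have "fibres_dvd CARD('a) (\<lambda>t. (x t, y t, z t)) {1..N}"
    using assms(2,3) by (intro fibres_dvd_of_moments[OF p]) auto
  then have "esym_on (2 * p) (\<lambda>t. x t + z t + y t) {1..N} - esym_on (2 * p) (\<lambda>t. x t + z t) {1..N}
      - (esym_on (2 * p) (\<lambda>t. x t + y t) {1..N} - esym_on (2 * p) x {1..N}) = pair_esym p y z {1..N}"
    using esym_on_second_difference[OF p finite_atLeastAtMost] assms(2) by simp
  then show ?thesis
    by (simp add: dderiv_def esym_eq_esym_on Hform_eq_pair_esym)
qed

end
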